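(* Let $(\mathbf x,\mathbf p,\mu)$ be a deterministic TFM satisfying weak UIC and $2$-weak-SCP, and let $\mathbf b$ be a bid vector under which at least one user is confirmed. Then every unconfirmed user $i$ (i.e. $x_i(\mathbf b)=0$) satisfies $b_i\le p(\mathbf b)$.
   Context: Setting (TFM). Each user $i$ has a true value $v_i\ge0$ and submits a single bid $b_i\ge0$; $\mathbf b=(b_1,\dots,b_m)$, $\mathbf b_{-i}$ the other bids. A TFM has an inclusion rule (run by the miner, choosing at most $B$ bids) and confirmation, payment, miner-revenue rules (run by the blockchain on included bids); the mechanism treats users symmetrically. Composing the honest inclusion rule with the others gives deterministic $(\mathbf x,\mathbf p,\mu)$: $x_i(\mathbf b)\in\{0,1\}$ indicates confirmation, $p_i(\mathbf b)\le b_i$ the payment ($0$ if unconfirmed), $\mu(\mathbf b)$ the miner revenue. Strategic players (a user, the miner, or the miner with some users) may bid untruthfully after seeing all bids, inject fake bids (true value $0$), and (if the miner is involved) include any at most $B$ available bids. Weak ($1$-strict) utility: miner revenue (if the miner is in the player) plus $v-p$ for each confirmed transaction of the player (true value $v$, payment $p$), minus $(b-v)$ for each unconfirmed transaction of the player with bid $b>v$. Weak UIC: with an honest miner, each user's weak utility is maximized by truthful bidding without fake bids, whatever the other bids. $c$-weak-SCP: for every coalition of the miner with between $1$ and $c$ users, joint weak utility is maximized by truthful bidding and honest miner behavior, whatever the other bids. Universal payment: for mechanisms satisfying weak UIC and $2$-weak-SCP, all users confirmed under $\mathbf b$ pay the same amount; $p(\mathbf b)$ denotes this common payment, and $p(\mathbf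 b)=0$ if no user is confirmed under $\mathbf b$. *)

theory Defs
  imports Complex_Main "HOL-Combinatorics.Permutations"
begin

text \<open>
  Bid vectors are lists of reals; users are identified with positions in the list.
  A (deterministic) TFM consists of a block size B, an honest inclusion rule
  (returning the set of positions of the bids the honest miner includes) and the
  blockchain's confirmation, payment and miner-revenue rules, which only see the
  block, i.e. the list of included bids (in increasing position order).
\<close>

record tfm =
  blk_size :: nat
  incl :: "real list \<Rightarrow> nat set"
  conf :: "real list \<Rightarrow> nat \<Rightarrow> bool"
  pay  :: "real list \<Rightarrow> nat \<Rightarrow> real"
  mrev :: "real list \<Rightarrow> real"

definition nonneg_bids :: "real list \<Rightarrow> bool" where
  "nonneg_bids bs \<longleftrightarrow> (\<forall>x\<in>set bs. 0 \<le> x)"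

definition block :: "real list \<Rightarrow> nat set \<Rightarrow> real list" where
  "block b S = nths b S"

text \<open>Position of bid k of b inside the block formed by S.\<close>
definition rank :: "nat set \<Rightarrow> nat \<Rightarrow> nat" where
  "rank S k = card {j\<in>S. j < k}"

definition confirmed_in :: "tfm \<Rightarrow> real list \<Rightarrow> nat set \<Rightarrow> nat \<Rightarrow> bool" where
  "confirmed_in M b S k \<longleftrightarrow> k < length b \<and> k \<in> S \<and> conf M (block b S) (rank S k)"

definition payment_in :: "tfm \<Rightarrow> real list \<Rightarrow> nat set \<Rightarrow> nat \<Rightarrow> real" where
  "payment_in M b S k = (if confirmed_in M b S k then pay M (block b S) (rank S k) else 0)"

definition revenue_in :: "tfm \<Rightarrow> real list \<Rightarrow> nat set \<Rightarrow> real" where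
  "revenue_in M b S = mrev M (block b S)"

definition xconf :: "tfm \<Rightarrow> real list \<Rightarrow> nat \<Rightarrow> bool" where
  "xconf M b i = confirmed_in M b (incl M b) i"

definition pmt :: "tfm \<Rightarrow> real list \<Rightarrow> nat \<Rightarrow> real" where
  "pmt M b i = payment_in M b (incl M b) i"

definition mu :: "tfm \<Rightarrow> real list \<Rightarrow> real" where
  "mu M b = revenue_in M b (incl M b)"

text \<open>Weak (1-strict) utility of one transaction at position k of b with true value v,
  when the bids at positions S are included.\<close>
definition tx_util :: "tfm \<Rightarrow> real list \<Rightarrow> nat set \<Rightarrow> nat \<Rightarrow> real \<Rightarrow> real" where
  "tx_util M b S k v =
     (if confirmed_in M b S k then v - payment_in M b S k
      else if b ! k > v then - (b ! k - v) else 0)"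

text \<open>Total weak utility of the fake bids (true value 0) placed at positions
  n, ..., length b - 1 of b.\<close>
definition fake_util :: "tfm \<Rightarrow> real list \<Rightarrow> nat set \<Rightarrow> nat \<Rightarrow> real" where
  "fake_util M b S n = (\<Sum>k\<in>{n..<length b}. tx_util M b S k 0)"

definition valid_tfm :: "tfm \<Rightarrow> bool" where
  "valid_tfm M \<longleftrightarrow>
     (\<forall>b. nonneg_bids b \<longrightarrow> incl M b \<subseteq> {..<length b} \<and> card (incl M b) \<le> blk_size M) \<and>
     (\<forall>b i. nonneg_bids b \<longrightarrow> i < length b \<longrightarrow> pmt M b i \<le> b ! i) \<and>
     (\<forall>b \<pi>. nonneg_bids b \<longrightarrow> \<pi> permutes {..<length b} \<longrightarrow>
         incl M (permute_list \<pi> b) = {k. k < length b \<and> \<pi> k \<in> incl M b}) \<and>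
     (\<forall>bl \<pi>. nonneg_bids bl \<longrightarrow> \<pi> permutes {..<length bl} \<longrightarrow>
         (\<forall>k<length bl. conf M (permute_list \<pi> bl) k = conf M bl (\<pi> k)
                      \<and> pay M (permute_list \<pi> bl) k = pay M bl (\<pi> k)) \<and>
         mrev M (permute_list \<pi> bl) = mrev M bl)"

text \<open>Weak UIC: honest miner; user i with true value b ! i cannot gain by replacing
  the truthful bid by r and injecting fake bids fs (appended at the end).\<close>
definition weak_UIC :: "tfm \<Rightarrow> bool" where
  "weak_UIC M \<longleftrightarrow>
     (\<forall>b i r fs. nonneg_bids b \<longrightarrow> i < length b \<longrightarrow> 0 \<le> r \<longrightarrow> nonneg_bids fs \<longrightarrow>
        (let b' = b[i := r] @ fs in
           tx_util M b' (incl M b') i (b ! i) + fake_util M b' (incl M b') (length b)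
             \<le> tx_util M b (incl M b) i (b ! i)))"

text \<open>c-weak-SCP: for every coalition of the miner with a set C of between 1 and c
  users (true values = their truthful bids), joint weak utility is maximised by truthful
  bidding and honest inclusion, whatever the other bids. A deviation replaces the bids of
  the coalition users by r, appends fake bids fs, and includes any set S of at most B of
  the available bids.\<close>
definition weak_SCP :: "nat \<Rightarrow> tfm \<Rightarrow> bool" where
  "weak_SCP c M \<longleftrightarrow>
     (\<forall>b C r fs S. nonneg_bids b \<longrightarrow> C \<subseteq> {..<length b} \<longrightarrow> 1 \<le> card C \<longrightarrow> card C \<le> c \<longrightarrow>
        (\<forall>k\<in>C. 0 \<le> r k) \<longrightarrow> nonneg_bids fs \<longrightarrow>
        (let b' = map (\<lambda>k. if k \<in> C then r k else b ! k) [0..<length b] @ fs in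
           S \<subseteq> {..<length b'} \<longrightarrow> card S \<le> blk_size M \<longrightarrow>
           revenue_in M b' S + (\<Sum>k\<in>C. tx_util M b' S k (b ! k)) + fake_util M b' S (length b)
             \<le> mu M b + (\<Sum>k\<in>C. tx_util M b (incl M b) k (b ! k))))"

end

theory Submission
  imports Defs
begin

text \<open>
  Suppose an unconfirmed user i bids b_i above the payment p of a confirmed user j, and
  let d be b with j's bid raised to b_i. By UIC, j (of true value b_i) is still confirmed
  in d at a price q \<le> p, and by symmetry so is i, at the same price q. The miner colluding
  with j at d can have j bid b_j and include the bids honest under b; the miner colluding
  with i and j at b can have both bid b_i and include the bids honest under d. Adding the
  two 2-weak-SCP inequalities, the miner revenues cancel and b_i \<le> q \<le> p remains.
\<close>

lemma nth_nths_rank: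
  assumes "k < length xs" and "k \<in> S"
  shows "rank S k < length (nths xs S)" and "nths xs S ! rank S k = xs ! k"
proof -
  have "nths xs S = nths (take k xs @ xs ! k # drop (Suc k) xs) S"
    using id_take_nth_drop[OF assms(1)] by simp
  also have "\<dots> = nths (take k xs) S @ xs ! k # nths (drop (Suc k) xs) {j. Suc j + k \<in> S}"
    using assms by (simp add: nths_append nths_Cons min_def)
  finally have split: "nths xs S = nths (take k xs) S @ xs ! k # nths (drop (Suc k) xs) {j. Suc j + k \<in> S}" .
  have "length (nths (take k xs) S) = rank S k"
    using assms(1) by (simp add: length_nths rank_def conj_commute)
  with split show "rank S k < length (nths xs S)" and "nths xs S ! rank S k = xs ! k"
    by (simp_all add: nth_append)
qed

lemma permute_list_transpose_eq:
  assumes "i < length xs" and "j < length xs" and "xs ! i = xs ! j"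
  shows "permute_list (Transposition.transpose i j) xs = xs"
proof -
  have "Transposition.transpose i j permutes {..<length xs}"
    using assms by (simp add: permutes_swap_id)
  then show ?thesis
    using assms by (intro nth_equalityI) (auto simp: permute_list_nth transpose_def)
qed

lemma valid_tfm_incl_equal_bids:
  assumes "valid_tfm M" and "nonneg_bids d"
    and "i < length d" and "j < length d" and "d ! i = d ! j"
  shows "i \<in> incl M d \<longleftrightarrow> j \<in> incl M d"
proof -
  let ?\<pi> = "Transposition.transpose i j"
  have "?\<pi> permutes {..<length d}"
    using assms by (simp add: permutes_swap_id)
  with assms have "incl M (permute_list ?\<pi> d) = {k. k < length d \<and> ?\<pi> k \<in> incl M d}"
    unfolding valid_tfm_def by blast
  then have "incl M d = {k. k < length d \<and> ?\<pi> k \<in> incl M d}"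
    using assms by (simp add: permute_list_transpose_eq)
  then show ?thesis
    using assms(3) by (metis (no_types, lifting) mem_Collect_eq transpose_apply_first)
qed

lemma valid_tfm_conf_pay_equal_bids:
  assumes "valid_tfm M" and "nonneg_bids bl"
    and "r < length bl" and "s < length bl" and "bl ! r = bl ! s"
  shows "conf M bl r = conf M bl s \<and> pay M bl r = pay M bl s"
proof -
  let ?\<sigma> = "Transposition.transpose r s"
  have "?\<sigma> permutes {..<length bl}"
    using assms by (simp add: permutes_swap_id)
  with assms have "conf M (permute_list ?\<sigma> bl) r = conf M bl (?\<sigma> r)
      \<and> pay M (permute_list ?\<sigma> bl) r = pay M bl (?\<sigma> r)"
    unfolding valid_tfm_def by blast
  then show ?thesis
    using assms by (simp add: permute_list_transpose_eq)
qed

lemma valid_tfm_equal_bids: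
  assumes "valid_tfm M" and "nonneg_bids d"
    and "i < length d" and "j < length d" and "d ! i = d ! j"
  shows "xconf M d i = xconf M d j \<and> pmt M d i = pmt M d j"
proof (cases "i \<in> incl M d")
  case False
  then show ?thesis
    using valid_tfm_incl_equal_bids[OF assms]
    by (simp add: xconf_def pmt_def payment_in_def confirmed_in_def)
next
  case True
  let ?S = "incl M d"
  have j_in: "j \<in> ?S"
    using True valid_tfm_incl_equal_bids[OF assms] by simp
  have "nonneg_bids (nths d ?S)"
    using assms(2) set_nths_subset[of d ?S] by (auto simp: nonneg_bids_def)
  then have "conf M (nths d ?S) (rank ?S i) = conf M (nths d ?S) (rank ?S j)
      \<and> pay M (nths d ?S) (rank ?S i) = pay M (nths d ?S) (rank ?S j)"
    using assms True j_in
    by (intro valid_tfm_conf_pay_equal_bids) (simp_all add: nth_nths_rank)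
  then show ?thesis
    using assms True j_in
    by (simp add: xconf_def pmt_def payment_in_def confirmed_in_def block_def)
qed

lemma tx_util_confirmed:
  "xconf M b k \<Longrightarrow> tx_util M b (incl M b) k v = v - pmt M b k"
  by (simp add: tx_util_def xconf_def pmt_def)

lemma tx_util_unconfirmed_truthful:
  "\<not> xconf M b k \<Longrightarrow> tx_util M b (incl M b) k (b ! k) = 0"
  by (simp add: tx_util_def xconf_def)

lemma weak_UIC_without_fakes:
  assumes "weak_UIC M" and "nonneg_bids b" and "i < length b" and "0 \<le> r"
  shows "tx_util M (b[i := r]) (incl M (b[i := r])) i (b ! i) \<le> tx_util M b (incl M b) i (b ! i)"
  using assms(1)[unfolded weak_UIC_def, rule_format, of b i r "[]"] assms(2-4)
  by (simp add: Let_def nonneg_bids_def fake_util_def)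

lemma weak_UIC_raise_bid_above_payment:
  assumes "weak_UIC M" and "nonneg_bids b" and "j < length b"
    and "xconf M b j" and "pmt M b j < v" and "0 \<le> v"
  shows "xconf M (b[j := v]) j" and "pmt M (b[j := v]) j \<le> pmt M b j"
proof -
  let ?d = "b[j := v]"
  have "nonneg_bids ?d"
    using assms(2,6) set_update_subset_insert[of b j v] by (auto simp: nonneg_bids_def)
  moreover have "0 \<le> b ! j"
    using assms(2,3) by (simp add: nonneg_bids_def)
  ultimately have "tx_util M b (incl M b) j v \<le> tx_util M ?d (incl M ?d) j v"
    using weak_UIC_without_fakes[OF assms(1), of ?d j "b ! j"] assms(3) by simp
  then have gain: "v - pmt M b j \<le> tx_util M ?d (incl M ?d) j (?d ! j)"
    using assms(3,4) by (simp add: tx_util_confirmed)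
  show confirmed: "xconf M ?d j"
    using gain assms(5) tx_util_unconfirmed_truthful[of M ?d j] by fastforce
  show "pmt M ?d j \<le> pmt M b j"
    using gain assms(3) by (simp add: tx_util_confirmed[OF confirmed])
qed

lemma weak_SCP_imitate_honest:
  assumes "weak_SCP c M" and "valid_tfm M" and "nonneg_bids b" and "nonneg_bids b'"
    and "length b' = length b" and "\<And>k. k < length b \<Longrightarrow> k \<notin> C \<Longrightarrow> b' ! k = b ! k"
    and "C \<subseteq> {..<length b}" and "1 \<le> card C" and "card C \<le> c"
  shows "mu M b' + (\<Sum>k\<in>C. tx_util M b' (incl M b') k (b ! k))
           \<le> mu M b + (\<Sum>k\<in>C. tx_util M b (incl M b) k (b ! k))"
proof -
  have b': "map (\<lambda>k. if k \<in> C then b' ! k else b ! k) [0..<length b] = b'"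
    using assms(5,6) by (intro nth_equalityI) auto
  have "0 \<le> b' ! k" if "k \<in> C" for k
    using that assms(4,5,7) by (auto simp: nonneg_bids_def)
  moreover have "incl M b' \<subseteq> {..<length b'}" and "card (incl M b') \<le> blk_size M"
    using assms(2,4) by (auto simp: valid_tfm_def)
  ultimately show ?thesis
    using assms(1)[unfolded weak_SCP_def, rule_format, of b C "(!) b'" "[]" "incl M b'"]
      assms(3,5,7-9)
    by (simp add: b' Let_def nonneg_bids_def fake_util_def revenue_in_def mu_def)
qed

theorem mainTheorem16:
  fixes M :: tfm and b :: "real list"
  assumes "valid_tfm M" and "weak_UIC M" and "weak_SCP 2 M"
    and "nonneg_bids b"
    and "\<exists>j<length b. xconf M b j"
  shows "\<forall>i<length b. \<not> xconf M b i \<longrightarrow>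
           (\<forall>j<length b. xconf M b j \<longrightarrow> b ! i \<le> pmt M b j)"
proof (intro allI impI)
  fix i j
  assume i: "i < length b" and unconf_i: "\<not> xconf M b i"
    and j: "j < length b" and conf_j: "xconf M b j"
  show "b ! i \<le> pmt M b j"
  proof (rule ccontr)
    assume "\<not> b ! i \<le> pmt M b j"
    define d where "d = b[j := b ! i]"
    have "i \<noteq> j" and "0 \<le> b ! i"
      using unconf_i conf_j assms(4) i by (auto simp: nonneg_bids_def)
    then have d: "nonneg_bids d" "length d = length b" "d ! i = b ! i" "d ! j = b ! i"
      using assms(4) i j set_update_subset_insert[of b j "b ! i"]
      by (auto simp: d_def nonneg_bids_def)
    have conf_d_j: "xconf M d j" and "pmt M d j \<le> pmt M b j"
      using weak_UIC_raise_bid_above_payment[OF assms(2,4) j conf_j] \<open>\<not> b ! i \<le> pmt M b j\<close>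
        \<open>0 \<le> b ! i\<close> by (auto simp: d_def)
    moreover have "xconf M d i = xconf M d j \<and> pmt M d i = pmt M d j"
      using i j by (intro valid_tfm_equal_bids[OF assms(1) d(1)]) (simp_all add: d(2-4))
    moreover have "mu M b + (\<Sum>k\<in>{j}. tx_util M b (incl M b) k (d ! k))
        \<le> mu M d + (\<Sum>k\<in>{j}. tx_util M d (incl M d) k (d ! k))"
      using j by (intro weak_SCP_imitate_honest[OF assms(3,1) d(1) assms(4)]) (auto simp: d_def)
    moreover have "mu M d + (\<Sum>k\<in>{i, j}. tx_util M d (incl M d) k (b ! k))
        \<le> mu M b + (\<Sum>k\<in>{i, j}. tx_util M b (incl M b) k (b ! k))"
      using i j \<open>i \<noteq> j\<close>
      by (intro weak_SCP_imitate_honest[OF assms(3,1,4) d(1)]) (auto simp: d_def)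
    ultimately show False
      using \<open>i \<noteq> j\<close> \<open>\<not> b ! i \<le> pmt M b j\<close> d(4) conf_j unconf_i
      by (simp add: tx_util_confirmed tx_util_unconfirmed_truthful)
  qed
qed

end
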